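(* Let $B$ be an abelian group equipped with an infinite family of group homomorphisms $r_v\colon B\to B_v$ (indexed by primes $v$ of good reduction) into finite abelian groups $B_v$. Fix an integer $n\ge 4$ and let $P\in B$ be a point of infinite order. For integers $x_1,\dots,x_n$ put $f(x_1,\dots,x_n)=(2x_1^2+x_2^2+x_3^2+x_4^2+\dots+x_n^2)P\in B$. Then $f(x_1,\dots,x_n)=0$ if and only if $(x_1,\dots,x_n)=(0,\dots,0)$; but for every prime $v$ of good reduction (i.e. every index $v$ of the family) there exist integers $x_1,\dots,x_n$ with $\gcd(x_1,\dots,x_n)=1$ such that $r_v\big((2x_1^2+x_2^2+x_3^2+x_4^2+\dots+x_n^2)P\big)=0$.
   Context: $B_v$ finite abelian groups, so every element of $B$ has finite order modulo $v$, i.e. $r_v(P)$ has finite order in $B_v$. In the intended applications (e.g. Mordell–Weil groups, $S$-units, odd $K$-groups over number fields) the maps $r_v$ are reduction maps at primes of good reduction. *)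

theory Defs
  imports "HOL-Algebra.Algebra"
begin

end

theory Submission
  imports Defs "HOL-Number_Theory.Number_Theory"
begin

(*
  The form 2 x_0^2 + x_1^2 + ... + x_(n-1)^2 is positive definite, so it kills the point P of
  infinite order only at 0.  Modulo v it suffices that the (positive) order m of r_v(P)
  divide 2 + b^2 + c^2 + d^2 for some b, c, d: take x = (1, b, c, d, 0, ...), which is
  primitive.  So -2 must be a sum of three squares modulo every m > 0, and by the Chinese
  remainder theorem it suffices to treat prime powers.  For odd p, the (p+1)/2 residues u^2
  and the (p+1)/2 residues -2 - w^2 (0 <= u, w <= (p-1)/2) must meet mod p, giving
  -2 = u^2 + w^2 mod p with p not dividing u; Hensel lifting the square root u of -2 - w^2
  reaches p^e.  For p = 2, the number -7 is 1 mod 8, hence a square modulo every power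
  of 2, and -2 = -7 + 1^2 + 2^2.
*)

lemma sum_two_squares_cong_prime:
  fixes p a :: int
  assumes p: "Factorial_Ring.prime p" "odd p"
  shows "\<exists>u w. [u\<^sup>2 + w\<^sup>2 = a] (mod p)"
proof -
  define h where "h = (p - 1) div 2"
  have p_eq: "p = 2 * h + 1" using p(2) h_def by (simp add: odd_two_times_div_two_succ)
  have h_nonneg: "h \<ge> 0" using prime_gt_0_int[OF p(1)] p_eq by linarith
  have square_cong_imp_eq: "x = y"
    if "x \<in> {0..h}" "y \<in> {0..h}" "[x\<^sup>2 = y\<^sup>2] (mod p)" for x y
  proof -
    have "p dvd (x - y) * (x + y)" using that(3)
      by (simp add: cong_iff_dvd_diff power2_eq_square algebra_simps)
    hence "p dvd x - y \<or> p dvd x + y" using p(1) by (simp add: prime_dvd_mult_iff)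
    moreover have "\<bar>x - y\<bar> < p" "0 \<le> x + y" "x + y < p" using that p_eq by auto
    ultimately have "x - y = 0 \<or> x + y = 0"
      using dvd_imp_le_int[of "x - y" p] zdvd_not_zless[of "x + y" p] by fastforce
    thus ?thesis using that by auto
  qed
  define S where "S = (\<lambda>x. x\<^sup>2 mod p) ` {0..h}"
  define T where "T = (\<lambda>x. (a - x\<^sup>2) mod p) ` {0..h}"
  have "inj_on (\<lambda>x. x\<^sup>2 mod p) {0..h}"
    by (rule inj_onI) (auto simp: cong_def intro: square_cong_imp_eq)
  hence card_S: "card S = nat (h + 1)" unfolding S_def using h_nonneg by (simp add: card_image)
  have "inj_on (\<lambda>x. (a - x\<^sup>2) mod p) {0..h}"
  proof (rule inj_onI)
    fix x y assume xy: "x \<in> {0..h}" "y \<in> {0..h}" "(a - x\<^sup>2) mod p = (a - y\<^sup>2) mod p"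
    hence "[a - x\<^sup>2 = a - y\<^sup>2] (mod p)" by (simp add: cong_def)
    from cong_diff[OF cong_refl[of a] this] have "[x\<^sup>2 = y\<^sup>2] (mod p)" by simp
    thus "x = y" using xy(1,2) by (rule square_cong_imp_eq[rotated 2])
  qed
  hence card_T: "card T = nat (h + 1)" unfolding T_def using h_nonneg by (simp add: card_image)
  have "S \<inter> T \<noteq> {}"
  proof
    assume "S \<inter> T = {}"
    hence "card (S \<union> T) = nat p + 1"
      using card_S card_T p_eq h_nonneg by (simp add: card_Un_disjoint S_def T_def)
    moreover have "S \<union> T \<subseteq> {0..<p}" unfolding S_def T_def using prime_gt_0_int[OF p(1)] by auto
    hence "card (S \<union> T) \<le> nat p" using card_mono[of "{0..<p}"] by fastforce
    ultimately show False by simp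
  qed
  then obtain u w where "u\<^sup>2 mod p = (a - w\<^sup>2) mod p" unfolding S_def T_def by auto
  hence "[u\<^sup>2 + w\<^sup>2 = a - w\<^sup>2 + w\<^sup>2] (mod p)" by (intro cong_add cong_refl) (simp add: cong_def)
  thus ?thesis by auto
qed

lemma square_root_cong_lift:
  fixes M a b :: int
  assumes "[b\<^sup>2 = a] (mod M)" "coprime (2 * b) M"
  shows "\<exists>b'. [b'\<^sup>2 = a] (mod M\<^sup>2) \<and> [b' = b] (mod M)"
proof -
  obtain s where s: "[2 * b * s = 1] (mod M)" using cong_solve_coprime_int[OF assms(2)] by blast
  obtain t where t: "b\<^sup>2 - a = M * t" using assms(1) by (auto simp: cong_iff_dvd_diff)
  obtain u where u: "1 - 2 * b * s = M * u" using s by (auto simp: cong_iff_dvd_diff dvd_diff_commute)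
  \<comment> \<open>Newton step for \<open>X\<^sup>2 - a\<close>, with \<open>s\<close> standing for \<open>1 / (2 b)\<close>\<close>
  define b' where "b' = b - (b\<^sup>2 - a) * s"
  have "b'\<^sup>2 - a = (b\<^sup>2 - a) * (1 - 2 * b * s) + (b\<^sup>2 - a)\<^sup>2 * s\<^sup>2"
    unfolding b'_def by (simp add: power2_eq_square algebra_simps)
  also have "\<dots> = M\<^sup>2 * (t * u + t\<^sup>2 * s\<^sup>2)" unfolding t u by (simp add: power2_eq_square algebra_simps)
  finally have "[b'\<^sup>2 = a] (mod M\<^sup>2)" by (simp add: cong_iff_dvd_diff)
  moreover have "[b' = b] (mod M)" unfolding b'_def t by (simp add: cong_iff_dvd_diff)
  ultimately show ?thesis by blast
qed

lemma square_root_cong_lift_iter: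
  fixes M a b :: int
  assumes "[b\<^sup>2 = a] (mod M)" "coprime (2 * b) M"
  shows "\<exists>b'. [b'\<^sup>2 = a] (mod M ^ 2 ^ k) \<and> coprime (2 * b') M"
proof (induction k)
  case 0
  then show ?case using assms by (auto intro: cong_dvd_modulus)
next
  case (Suc k)
  then obtain c where c: "[c\<^sup>2 = a] (mod M ^ 2 ^ k)" "coprime (2 * c) M" by blast
  from c(2) have "coprime (2 * c) (M ^ 2 ^ k)" by simp
  from square_root_cong_lift[OF c(1) this] obtain b' where
    b': "[b'\<^sup>2 = a] (mod (M ^ 2 ^ k)\<^sup>2)" "[b' = c] (mod M ^ 2 ^ k)" by blast
  have "[2 * c = 2 * b'] (mod M)"
    using b'(2) by (intro cong_mult cong_refl) (auto intro: cong_dvd_modulus cong_sym)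
  hence "coprime (2 * b') M" using c(2) by (rule coprime_cong_transfer_left[rotated])
  moreover have "(M ^ 2 ^ k)\<^sup>2 = M ^ 2 ^ Suc k" by (simp flip: power_mult add: mult.commute)
  ultimately show ?case using b'(1) by auto
qed

lemma square_root_cong_two_power:
  fixes a :: int
  assumes "[a = 1] (mod 8)"
  shows "\<exists>b. odd b \<and> [b\<^sup>2 = a] (mod 2 ^ (k + 3))"
proof (induction k)
  case 0
  show ?case using assms by (intro exI[of _ 1]) (simp add: cong_sym)
next
  case (Suc k)
  then obtain b q where b: "odd b" and q: "b\<^sup>2 - a = 8 * 2 ^ k * q"
    by (auto simp: cong_iff_dvd_diff power_add)
  show ?case
  proof (cases "even q")
    case True
    then obtain q' where "q = 2 * q'" by blast
    hence "b\<^sup>2 - a = 2 ^ (Suc k + 3) * q'" using q by (simp add: power_add)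
    thus ?thesis using b by (intro exI[of _ b]) (simp add: cong_iff_dvd_diff)
  next
    case False
    \<comment> \<open>the correction \<open>2^(k+2)\<close> changes \<open>b\<^sup>2 - a\<close> by \<open>2^(k+3) b\<close> modulo \<open>2^(k+4)\<close>, cancelling the odd \<open>q\<close>\<close>
    define W :: int where "W = 2 ^ k"
    obtain j where j: "q + b = 2 * j" using False b by (metis odd_add evenE)
    have "(b + 4 * W)\<^sup>2 - a = (b\<^sup>2 - a) + 8 * W * b + 16 * W * W"
      by (simp add: power2_eq_square algebra_simps)
    also have "\<dots> = 8 * W * (q + b) + 16 * W * W" using q unfolding W_def by (simp add: algebra_simps)
    also have "\<dots> = 2 ^ (Suc k + 3) * (j + W)" unfolding j W_def by (simp add: algebra_simps power_add)
    finally have "[(b + 4 * W)\<^sup>2 = a] (mod 2 ^ (Suc k + 3))" by (simp add: cong_iff_dvd_diff)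
    moreover have "odd (b + 4 * W)" using b by simp
    ultimately show ?thesis by blast
  qed
qed

definition minus_two_sum_three_squares_mod :: "int \<Rightarrow> bool" where
  "minus_two_sum_three_squares_mod m \<longleftrightarrow> (\<exists>b c d. [b\<^sup>2 + c\<^sup>2 + d\<^sup>2 = -2] (mod m))"

lemma minus_two_sum_three_squares_mod_prime_power:
  fixes p :: int
  assumes p: "Factorial_Ring.prime p"
  shows "minus_two_sum_three_squares_mod (p ^ e)"
proof (cases "p = 2")
  case True
  obtain b :: int where "[b\<^sup>2 = -7] (mod 2 ^ (e + 3))"
    using square_root_cong_two_power[of "-7"] by (auto simp: cong_def)
  hence "[b\<^sup>2 = -7] (mod 2 ^ e)" by (rule cong_dvd_modulus) (simp add: power_add)
  from cong_add[OF this cong_refl[of 5]] have "[b\<^sup>2 + 1\<^sup>2 + 2\<^sup>2 = -2] (mod 2 ^ e)" by (simp add: add.commute)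
  thus ?thesis unfolding minus_two_sum_three_squares_mod_def True by blast
next
  case False
  hence odd_p: "odd p" using prime_ge_2_int[OF p] by (intro prime_odd_int[OF p]) linarith
  obtain u w where uw: "[u\<^sup>2 + w\<^sup>2 = -2] (mod p)"
    using sum_two_squares_cong_prime[OF p odd_p] by blast
  have solve: "[y\<^sup>2 = -2 - z\<^sup>2] (mod p)" if "[y\<^sup>2 + z\<^sup>2 = -2] (mod p)" for y z
    using cong_diff[OF that cong_refl[of "z\<^sup>2"]] by simp
  have "\<not> p dvd u \<or> \<not> p dvd w"
  proof (rule ccontr)
    assume "\<not> (\<not> p dvd u \<or> \<not> p dvd w)"
    hence "[u\<^sup>2 + w\<^sup>2 = 0] (mod p)" by (simp add: cong_0_iff power2_eq_square)
    hence "[0 = -2] (mod p)" using uw by (metis cong_sym cong_trans)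
    hence "p dvd 2" by (simp add: cong_iff_dvd_diff)
    hence "p = 2" using p primes_dvd_imp_eq[of p 2] by simp
    thus False using False by simp
  qed
  moreover have "[w\<^sup>2 + u\<^sup>2 = -2] (mod p)" using uw by (simp add: add.commute)
  ultimately obtain y z where yz: "[y\<^sup>2 = -2 - z\<^sup>2] (mod p)" "\<not> p dvd y"
    using solve[OF uw] solve by blast
  have "coprime (2 * y) p"
    using yz(2) odd_p p by (simp add: prime_imp_coprime coprime_commute)
  then obtain b where "[b\<^sup>2 = -2 - z\<^sup>2] (mod p ^ 2 ^ e)"
    using square_root_cong_lift_iter[OF yz(1)] by blast
  hence "[b\<^sup>2 = -2 - z\<^sup>2] (mod p ^ e)"
    by (rule cong_dvd_modulus) (simp add: le_imp_power_dvd less_imp_le)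
  from cong_add[OF this cong_refl[of "z\<^sup>2"]] have "[b\<^sup>2 + z\<^sup>2 + 0\<^sup>2 = -2] (mod p ^ e)" by simp
  thus ?thesis unfolding minus_two_sum_three_squares_mod_def by blast
qed

lemma minus_two_sum_three_squares_mod_mult:
  fixes m1 m2 :: int
  assumes "coprime m1 m2" "minus_two_sum_three_squares_mod m1" "minus_two_sum_three_squares_mod m2"
  shows "minus_two_sum_three_squares_mod (m1 * m2)"
proof -
  obtain b1 c1 d1 where 1: "[b1\<^sup>2 + c1\<^sup>2 + d1\<^sup>2 = -2] (mod m1)"
    using assms(2) unfolding minus_two_sum_three_squares_mod_def by blast
  obtain b2 c2 d2 where 2: "[b2\<^sup>2 + c2\<^sup>2 + d2\<^sup>2 = -2] (mod m2)"
    using assms(3) unfolding minus_two_sum_three_squares_mod_def by blast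
  obtain b c d where
    b: "[b = b1] (mod m1)" "[b = b2] (mod m2)" and
    c: "[c = c1] (mod m1)" "[c = c2] (mod m2)" and
    d: "[d = d1] (mod m1)" "[d = d2] (mod m2)"
    using binary_chinese_remainder_int[OF assms(1)] by metis
  have "[b\<^sup>2 + c\<^sup>2 + d\<^sup>2 = b1\<^sup>2 + c1\<^sup>2 + d1\<^sup>2] (mod m1)"
    using b(1) c(1) d(1) by (intro cong_add cong_pow)
  hence "[b\<^sup>2 + c\<^sup>2 + d\<^sup>2 = -2] (mod m1)" using 1 by (rule cong_trans)
  moreover have "[b\<^sup>2 + c\<^sup>2 + d\<^sup>2 = b2\<^sup>2 + c2\<^sup>2 + d2\<^sup>2] (mod m2)"
    using b(2) c(2) d(2) by (intro cong_add cong_pow)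
  hence "[b\<^sup>2 + c\<^sup>2 + d\<^sup>2 = -2] (mod m2)" using 2 by (rule cong_trans)
  ultimately have "[b\<^sup>2 + c\<^sup>2 + d\<^sup>2 = -2] (mod m1 * m2)"
    using assms(1) by (rule coprime_cong_mult)
  thus ?thesis unfolding minus_two_sum_three_squares_mod_def by blast
qed

lemma pos_int_prime_power_coprime_induct:
  fixes m :: int
  assumes "m > 0"
    and prime_power: "\<And>p k. Factorial_Ring.prime p \<Longrightarrow> P (p ^ k)"
    and coprime_mult: "\<And>a b. coprime a b \<Longrightarrow> P a \<Longrightarrow> P b \<Longrightarrow> P (a * b)"
  shows "P m"
proof -
  have "P (\<Prod>p\<in>S. p ^ multiplicity p m)" if "S \<subseteq> prime_factors m" for S
  proof -
    have "finite S" using that finite_subset by blast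
    thus ?thesis using that
    proof (induction S rule: finite_induct)
      case empty
      show ?case using prime_power[of 2 0] by simp
    next
      case (insert p S)
      have "Factorial_Ring.prime p" using insert.prems by (auto intro: in_prime_factors_imp_prime)
      have "coprime (p ^ multiplicity p m) (\<Prod>q\<in>S. q ^ multiplicity q m)"
        using insert.hyps(2) insert.prems by (intro prod_coprime_right) (auto intro: primes_coprime)
      from coprime_mult[OF this prime_power[OF \<open>Factorial_Ring.prime p\<close>]] show ?case
        using insert by simp
    qed
  qed
  from this[OF order_refl] show ?thesis using \<open>m > 0\<close> by (simp add: prod_prime_factors)
qed

lemma minus_two_sum_three_squares_mod_pos:
  "m > 0 \<Longrightarrow> minus_two_sum_three_squares_mod m"
  by (rule pos_int_prime_power_coprime_induct)
    (auto intro: minus_two_sum_three_squares_mod_prime_power minus_two_sum_three_squares_mod_mult)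

lemma quadratic_form_eq_0_iff:
  fixes x :: "nat \<Rightarrow> int"
  assumes "n \<ge> 1"
  shows "2 * (x 0)\<^sup>2 + (\<Sum>i\<in>{1..<n}. (x i)\<^sup>2) = 0 \<longleftrightarrow> (\<forall>i<n. x i = 0)"
proof -
  have "2 * (x 0)\<^sup>2 + (\<Sum>i\<in>{1..<n}. (x i)\<^sup>2) = (x 0)\<^sup>2 + (\<Sum>i<n. (x i)\<^sup>2)"
    using assms by (simp add: lessThan_atLeast0 sum.atLeast_Suc_lessThan)
  also have "\<dots> = 0 \<longleftrightarrow> x 0 = 0 \<and> (\<Sum>i<n. (x i)\<^sup>2) = 0"
    by (simp add: add_nonneg_eq_0_iff sum_nonneg)
  also have "\<dots> \<longleftrightarrow> (\<forall>i<n. x i = 0)"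
    using assms by (auto simp: sum_nonneg_eq_0_iff)
  finally show ?thesis .
qed

lemma exists_primitive_zero_of_quadratic_form_mod:
  fixes m :: int and n :: nat
  assumes "m > 0" "n \<ge> 4"
  shows "\<exists>x :: nat \<Rightarrow> int. Gcd (x ` {..<n}) = 1 \<and> m dvd 2 * (x 0)\<^sup>2 + (\<Sum>i\<in>{1..<n}. (x i)\<^sup>2)"
proof -
  obtain b c d where bcd: "[b\<^sup>2 + c\<^sup>2 + d\<^sup>2 = -2] (mod m)"
    using minus_two_sum_three_squares_mod_pos[OF assms(1)]
    unfolding minus_two_sum_three_squares_mod_def by blast
  define x :: "nat \<Rightarrow> int" where "x i = (if i < 4 then [1, b, c, d] ! i else 0)" for i
  have "(\<Sum>i\<in>{1..<n}. (x i)\<^sup>2) = (\<Sum>i\<in>{1..<4}. (x i)\<^sup>2) + (\<Sum>i\<in>{4..<n}. (x i)\<^sup>2)"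
    using assms(2) by (simp add: sum.atLeastLessThan_concat)
  also have "\<dots> = b\<^sup>2 + c\<^sup>2 + d\<^sup>2"
    by (simp add: x_def numeral_eq_Suc atLeastLessThanSuc)
  finally have "2 * (x 0)\<^sup>2 + (\<Sum>i\<in>{1..<n}. (x i)\<^sup>2) = 2 + (b\<^sup>2 + c\<^sup>2 + d\<^sup>2)"
    by (simp add: x_def)
  moreover have "[2 + (b\<^sup>2 + c\<^sup>2 + d\<^sup>2) = 0] (mod m)"
    using cong_add[OF cong_refl[of 2] bcd] by simp
  moreover have "1 \<in> x ` {..<n}" using assms(2) by (intro image_eqI[of _ _ 0]) (auto simp: x_def)
  hence "Gcd (x ` {..<n}) = 1" by (intro Gcd_eq_1_I[of 1]) auto
  ultimately show ?thesis by (auto simp: cong_0_iff)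
qed

theorem proposition4p1:
  fixes B :: "('b, 'm) monoid_scheme"
    and Bv :: "'v \<Rightarrow> ('c, 'n) monoid_scheme"
    and r :: "'v \<Rightarrow> 'b \<Rightarrow> 'c"
    and V :: "'v set"
    and n :: nat
    and P :: 'b
  assumes "comm_group B"
    and "infinite V"
    and "\<And>v. v \<in> V \<Longrightarrow> comm_group (Bv v)"
    and "\<And>v. v \<in> V \<Longrightarrow> finite (carrier (Bv v))"
    and "\<And>v. v \<in> V \<Longrightarrow> r v \<in> hom B (Bv v)"
    and "n \<ge> 4"
    and "P \<in> carrier B"
    and "group.ord B P = 0"
  shows "(\<forall>x :: nat \<Rightarrow> int.
            P [^]\<^bsub>B\<^esub> (2 * (x 0)\<^sup>2 + (\<Sum>i\<in>{1..<n}. (x i)\<^sup>2)) = \<one>\<^bsub>B\<^esub>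
            \<longleftrightarrow> (\<forall>i<n. x i = 0))
       \<and> (\<forall>v\<in>V. \<exists>x :: nat \<Rightarrow> int. Gcd (x ` {..<n}) = 1 \<and>
            r v (P [^]\<^bsub>B\<^esub> (2 * (x 0)\<^sup>2 + (\<Sum>i\<in>{1..<n}. (x i)\<^sup>2))) = \<one>\<^bsub>Bv v\<^esub>)"
proof -
  interpret B: comm_group B by fact
  have pow_eq_one_iff: "P [^]\<^bsub>B\<^esub> k = \<one>\<^bsub>B\<^esub> \<longleftrightarrow> k = 0" for k :: int
    using B.int_pow_eq_id[OF assms(7)] assms(8) by simp
  have reduction_vanishes: "\<exists>x :: nat \<Rightarrow> int. Gcd (x ` {..<n}) = 1 \<and>
      r v (P [^]\<^bsub>B\<^esub> (2 * (x 0)\<^sup>2 + (\<Sum>i\<in>{1..<n}. (x i)\<^sup>2))) = \<one>\<^bsub>Bv v\<^esub>"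
    if "v \<in> V" for v
  proof -
    interpret Bv: comm_group "Bv v" using assms(3)[OF that] .
    have hom: "r v \<in> hom B (Bv v)" using assms(5)[OF that] .
    have rP: "r v P \<in> carrier (Bv v)" using hom_in_carrier[OF hom assms(7)] .
    have "Bv.ord (r v P) \<ge> 1" using Bv.ord_ge_1[OF assms(4)[OF that] rP] .
    then obtain x :: "nat \<Rightarrow> int" where x: "Gcd (x ` {..<n}) = 1"
      and ord_dvd: "int (Bv.ord (r v P)) dvd 2 * (x 0)\<^sup>2 + (\<Sum>i\<in>{1..<n}. (x i)\<^sup>2)"
      using exists_primitive_zero_of_quadratic_form_mod[of "int (Bv.ord (r v P))" n] assms(6) by auto
    have "r v (P [^]\<^bsub>B\<^esub> (2 * (x 0)\<^sup>2 + (\<Sum>i\<in>{1..<n}. (x i)\<^sup>2)))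
        = r v P [^]\<^bsub>Bv v\<^esub> (2 * (x 0)\<^sup>2 + (\<Sum>i\<in>{1..<n}. (x i)\<^sup>2))"
      using hom_int_pow[OF hom assms(7) B.is_group Bv.is_group] .
    also have "\<dots> = \<one>\<^bsub>Bv v\<^esub>" using Bv.int_pow_eq_id[OF rP] ord_dvd by simp
    finally show ?thesis using x by blast
  qed
  show ?thesis
    using pow_eq_one_iff quadratic_form_eq_0_iff[of n] assms(6) reduction_vanishes by simp
qed

end
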